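(* The hybrid evaluator $IIH\mathbin{\Diamond}III$ and the uniform evaluator $IIS$ are one-step equivalent: for every term $M$ they produce the same evaluation sequence (in particular they are equal as partial functions). Moreover $IIS = rb\circ III$ where $rb$ is the readback evaluator given by $rb(x)=x$, $rb(\lambda x.B)=\lambda x.B$, and $rb(MN)=M'N'$ if $rb(M)=M'$ and $rb(III(N))=N'$.
   Context: Terms: $\Lambda ::= x\mid\lambda x.\Lambda\mid\Lambda\Lambda$; $[N/x]B$ is capture-avoiding substitution. An evaluator is a partial function $\Lambda\rightharpoonup\Lambda$ defined by inference rules, undefined (divergent) where no finite derivation exists; $\mathrm{id}$ is the identity. Eval-apply template: given evaluators $la,op_1,ar_1,op_2,ar_2$ (possibly $ea$ itself), $ea$ is defined by (var) $ea(x)=x$; (abs) $ea(\lambda x.B)=\lambda x.B'$ if $la(B)=B'$; (con) $ea(MN)=B'$ if $op_1(M)=\lambda x.B$, $ar_1(N)=N'$, $ea([N'/x]B)=B'$; (neu) $ea(MN)=M''N'$ if $op_1(M)=M'$, $M'$ not an abstraction, $op_2(M')=M''$, $ar_2(N)=N'$. Premises are evaluated left to right; the evaluation sequence is the sequence of reduction steps of the whole term given by the (con) contractions (including those inside subsidiary calls) in in-order traversal of the derivation. Uniform evaluator $XYZ\in\{I,S\}^3$: $op_1=ea$, $op_2=\mathrm{id}$, and $la$, $ar_1$, $ar_2$ equal to $ea$ itself when the letter is $S$ and $\mathrm{id}$ when it is $I$ ($III$ is call-by-name). Hybrid evaluator $X_1X_2X_3\mathbin{\Diamond}Y_1Y_2Y_3$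 ($X_i\in\{I,S,H\}$): with subsidiary $su$ the uniform evaluator $Y_1Y_2Y_3$, it is the instance $hy$ of the template with $op_1=su$, $op_2=hy$, and $la$, $ar_1$, $ar_2$ equal to $\mathrm{id}$, $su$, or $hy$ according as $X_1$, $X_2$, $X_3$ is $I$, $S$, or $H$. The evaluation sequence of a composition $rb\circ e$ is that of $e$ followed by that of $rb$ on the result. *)

theory Defs
  imports Main
begin

datatype dB = Var nat | Abs dB | App dB dB

primrec lift :: "dB \<Rightarrow> nat \<Rightarrow> dB" where
  "lift (Var i) k = (if i < k then Var i else Var (i + 1))"
| "lift (Abs s) k = Abs (lift s (k + 1))"
| "lift (App s t) k = App (lift s k) (lift t k)"

primrec subst :: "dB \<Rightarrow> dB \<Rightarrow> nat \<Rightarrow> dB" where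
  "subst (Var i) s k = (if k < i then Var (i - 1) else if i = k then s else Var i)"
| "subst (Abs t) s k = Abs (subst t (lift s 0) (k + 1))"
| "subst (App t u) s k = App (subst t s k) (subst u s k)"

definition beta_contract :: "dB \<Rightarrow> dB \<Rightarrow> dB" where
  "beta_contract B N = subst B N 0"

definition is_abs :: "dB \<Rightarrow> bool" where
  "is_abs t = (\<exists>B. t = Abs B)"

text \<open>A reduction step of a whole term is recorded as the position of the contracted
  redex (a path: L = operator, R = operand, Bd = body of abstraction) together with the
  resulting whole term. Steps performed by a subsidiary call on a subterm are lifted to
  the enclosing term by the context the subterm sits in.\<close>

datatype dir = L | R | Bd

type_synonym step = "dir list \<times> dB"

definition liftL :: "dB \<Rightarrow> step list \<Rightarrow> step list" where
  "liftL N ss = map (\<lambda>(p, t). (L # p, App t N)) ss"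

definition liftR :: "dB \<Rightarrow> step list \<Rightarrow> step list" where
  "liftR M ss = map (\<lambda>(p, t). (R # p, App M t)) ss"

definition liftB :: "step list \<Rightarrow> step list" where
  "liftB ss = map (\<lambda>(p, t). (Bd # p, Abs t)) ss"

text \<open>An evaluator is represented as a relation ev M V ss: ev(M) = V with evaluation
  sequence ss (defined iff a finite derivation exists). The identity evaluator:\<close>

definition id_ev :: "dB \<Rightarrow> dB \<Rightarrow> step list \<Rightarrow> bool" where
  "id_ev M V ss \<longleftrightarrow> V = M \<and> ss = []"

datatype letter = LI | LS | LH

section \<open>Uniform evaluators XYZ (X,Y,Z in {I,S}): op1 = ea, op2 = id,
  la/ar1/ar2 = ea if the letter is S, id if it is I\<close>

inductive unif :: "letter \<Rightarrow> letter \<Rightarrow> letter \<Rightarrow> dB \<Rightarrow> dB \<Rightarrow> step list \<Rightarrow> bool"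
  for X Y Z where
  var: "unif X Y Z (Var i) (Var i) []"
| abs: "\<lbrakk> (X = LI \<and> id_ev B B' ss) \<or> (X = LS \<and> unif X Y Z B B' ss) \<rbrakk>
        \<Longrightarrow> unif X Y Z (Abs B) (Abs B') (liftB ss)"
| con: "\<lbrakk> unif X Y Z M (Abs B) s1;
          (Y = LI \<and> id_ev N N' s2) \<or> (Y = LS \<and> unif X Y Z N N' s2);
          unif X Y Z (beta_contract B N') B' s3 \<rbrakk>
        \<Longrightarrow> unif X Y Z (App M N) B'
              (liftL N s1 @ liftR (Abs B) s2 @ [([], beta_contract B N')] @ s3)"
| neu: "\<lbrakk> unif X Y Z M M' s1; \<not> is_abs M'; id_ev M' M'' s2;
          (Z = LI \<and> id_ev N N' s3) \<or> (Z = LS \<and> unif X Y Z N N' s3) \<rbrakk>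
        \<Longrightarrow> unif X Y Z (App M N) (App M'' N')
              (liftL N s1 @ liftL N s2 @ liftR M'' s3)"

section \<open>Hybrid evaluators X1X2X3 \<diamond> su: op1 = su, op2 = hy,
  la/ar1/ar2 = id, su or hy according to the letter I, S or H\<close>

inductive hyb :: "letter \<Rightarrow> letter \<Rightarrow> letter \<Rightarrow> (dB \<Rightarrow> dB \<Rightarrow> step list \<Rightarrow> bool)
                  \<Rightarrow> dB \<Rightarrow> dB \<Rightarrow> step list \<Rightarrow> bool"
  for X1 X2 X3 su where
  var: "hyb X1 X2 X3 su (Var i) (Var i) []"
| abs: "\<lbrakk> (X1 = LI \<and> id_ev B B' ss) \<or> (X1 = LS \<and> su B B' ss)
          \<or> (X1 = LH \<and> hyb X1 X2 X3 su B B' ss) \<rbrakk>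
        \<Longrightarrow> hyb X1 X2 X3 su (Abs B) (Abs B') (liftB ss)"
| con: "\<lbrakk> su M (Abs B) s1;
          (X2 = LI \<and> id_ev N N' s2) \<or> (X2 = LS \<and> su N N' s2)
          \<or> (X2 = LH \<and> hyb X1 X2 X3 su N N' s2);
          hyb X1 X2 X3 su (beta_contract B N') B' s3 \<rbrakk>
        \<Longrightarrow> hyb X1 X2 X3 su (App M N) B'
              (liftL N s1 @ liftR (Abs B) s2 @ [([], beta_contract B N')] @ s3)"
| neu: "\<lbrakk> su M M' s1; \<not> is_abs M'; hyb X1 X2 X3 su M' M'' s2;
          (X3 = LI \<and> id_ev N N' s3) \<or> (X3 = LS \<and> su N N' s3)
          \<or> (X3 = LH \<and> hyb X1 X2 X3 su N N' s3) \<rbrakk>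
        \<Longrightarrow> hyb X1 X2 X3 su (App M N) (App M'' N')
              (liftL N s1 @ liftL N s2 @ liftR M'' s3)"

inductive rb :: "dB \<Rightarrow> dB \<Rightarrow> step list \<Rightarrow> bool" where
  var: "rb (Var i) (Var i) []"
| abs: "rb (Abs B) (Abs B) []"
| app: "\<lbrakk> rb M M' s1; unif LI LI LI N N1 s2; rb N1 N' s3 \<rbrakk>
        \<Longrightarrow> rb (App M N) (App M' N') (liftL N s1 @ liftR M' s2 @ liftR M' s3)"

definition comp_ev :: "(dB \<Rightarrow> dB \<Rightarrow> step list \<Rightarrow> bool) \<Rightarrow> (dB \<Rightarrow> dB \<Rightarrow> step list \<Rightarrow> bool)
                       \<Rightarrow> dB \<Rightarrow> dB \<Rightarrow> step list \<Rightarrow> bool" where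
  "comp_ev e2 e M V ss \<longleftrightarrow> (\<exists>P s1 s2. e M P s1 \<and> e2 P V s2 \<and> ss = s1 @ s2)"

end

theory Submission
  imports Defs
begin

text \<open>Both evaluators run call-by-name to a weak head normal form and then read the result
  back: in a neutral application the operator is already a weak head normal form, which
  call-by-name leaves fixed (with an empty evaluation sequence), and the operand is evaluated
  by the same recursion. Hence each of them equals \<open>rb \<circ> III\<close> step for step, and the
  one-step equivalence follows. Both directions of \<open>ev = rb \<circ> III\<close> are inductions on
  derivations; determinism of call-by-name identifies the intermediate term.\<close>

abbreviation cbn :: "dB \<Rightarrow> dB \<Rightarrow> step list \<Rightarrow> bool" where
  "cbn \<equiv> unif LI LI LI"

abbreviation iis :: "dB \<Rightarrow> dB \<Rightarrow> step list \<Rightarrow> bool" where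
  "iis \<equiv> unif LI LI LS"

abbreviation hy :: "dB \<Rightarrow> dB \<Rightarrow> step list \<Rightarrow> bool" where
  "hy \<equiv> hyb LI LI LH cbn"

lemma lift_Nil [simp]: "liftL N [] = []" "liftR M [] = []" "liftB [] = []"
  by (simp_all add: liftL_def liftR_def liftB_def)

lemma lift_append [simp]:
  "liftL N (a @ b) = liftL N a @ liftL N b"
  "liftR M (a @ b) = liftR M a @ liftR M b"
  by (simp_all add: liftL_def liftR_def)

lemma cbn_AbsI: "cbn (Abs B) (Abs B) []"
  using unif.abs[of LI B B "[]" LI LI] by (simp add: id_ev_def)

lemma cbn_conI:
  "cbn M (Abs B) s1 \<Longrightarrow> cbn (beta_contract B N) V s3 \<Longrightarrow>
   cbn (App M N) V (liftL N s1 @ ([], beta_contract B N) # s3)"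
  using unif.con[of LI LI LI M B s1 N N "[]"] by (simp add: id_ev_def)

lemma cbn_neuI: "cbn M M' s1 \<Longrightarrow> \<not> is_abs M' \<Longrightarrow> cbn (App M N) (App M' N) (liftL N s1)"
  using unif.neu[of LI LI LI M M' s1 M' "[]" N N "[]"] by (simp add: id_ev_def)

lemma iis_AbsI: "iis (Abs B) (Abs B) []"
  using unif.abs[of LI B B "[]" LI LS] by (simp add: id_ev_def)

lemma iis_conI:
  "iis M (Abs B) s1 \<Longrightarrow> iis (beta_contract B N) V s3 \<Longrightarrow>
   iis (App M N) V (liftL N s1 @ ([], beta_contract B N) # s3)"
  using unif.con[of LI LI LS M B s1 N N "[]"] by (simp add: id_ev_def)

lemma iis_neuI:
  "iis M M' s1 \<Longrightarrow> \<not> is_abs M' \<Longrightarrow> iis N N' s3 \<Longrightarrow>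
   iis (App M N) (App M' N') (liftL N s1 @ liftR M' s3)"
  using unif.neu[of LI LI LS M M' s1 M' "[]" N N' s3] by (simp add: id_ev_def)

lemma hy_AbsI: "hy (Abs B) (Abs B) []"
  using hyb.abs[of LI B B "[]" cbn LI LH] by (simp add: id_ev_def)

lemma hy_conI:
  "cbn M (Abs B) s1 \<Longrightarrow> hy (beta_contract B N) V s3 \<Longrightarrow>
   hy (App M N) V (liftL N s1 @ ([], beta_contract B N) # s3)"
  using hyb.con[of cbn M B s1 LI N N "[]" LI LH] by (simp add: id_ev_def)

lemma hy_neuI:
  "cbn M M' s1 \<Longrightarrow> \<not> is_abs M' \<Longrightarrow> hy M' M'' s2 \<Longrightarrow> hy N N' s3 \<Longrightarrow>
   hy (App M N) (App M'' N') (liftL N s1 @ liftL N s2 @ liftR M'' s3)"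
  using hyb.neu[of cbn M M' s1 LI LI LH M'' s2 N N' s3] by simp

lemma cbn_induct [consumes 1, case_names Var Abs con neu]:
  assumes "cbn M V s"
    and "\<And>i. P (Var i) (Var i) []"
    and "\<And>B. P (Abs B) (Abs B) []"
    and "\<And>M B s1 N V s3. cbn M (Abs B) s1 \<Longrightarrow> P M (Abs B) s1 \<Longrightarrow>
           cbn (beta_contract B N) V s3 \<Longrightarrow> P (beta_contract B N) V s3 \<Longrightarrow>
           P (App M N) V (liftL N s1 @ ([], beta_contract B N) # s3)"
    and "\<And>M M' s1 N. cbn M M' s1 \<Longrightarrow> P M M' s1 \<Longrightarrow> \<not> is_abs M' \<Longrightarrow>
           P (App M N) (App M' N) (liftL N s1)"
  shows "P M V s"
  using assms(1)
proof (induction rule: unif.induct)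
  case (var i) then show ?case using assms(2) by simp
next
  case (abs B B' ss) then show ?case using assms(3) by (simp add: id_ev_def)
next
  case (con M B s1 N N' s2 B' s3)
  then have "N' = N" "s2 = []" by (auto simp: id_ev_def)
  with con assms(4)[of M B s1 N B' s3] show ?case by simp
next
  case (neu M M' s1 M'' s2 N N' s3)
  then have "M'' = M'" "s2 = []" "N' = N" "s3 = []" by (auto simp: id_ev_def)
  with neu assms(5)[of M M' s1 N] show ?case by simp
qed

lemma iis_induct [consumes 1, case_names Var Abs con neu]:
  assumes "iis M V s"
    and "\<And>i. P (Var i) (Var i) []"
    and "\<And>B. P (Abs B) (Abs B) []"
    and "\<And>M B s1 N V s3. iis M (Abs B) s1 \<Longrightarrow> P M (Abs B) s1 \<Longrightarrow>
           iis (beta_contract B N) V s3 \<Longrightarrow> P (beta_contract B N) V s3 \<Longrightarrow>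
           P (App M N) V (liftL N s1 @ ([], beta_contract B N) # s3)"
    and "\<And>M M' s1 N N' s3. iis M M' s1 \<Longrightarrow> P M M' s1 \<Longrightarrow> \<not> is_abs M' \<Longrightarrow>
           iis N N' s3 \<Longrightarrow> P N N' s3 \<Longrightarrow> P (App M N) (App M' N') (liftL N s1 @ liftR M' s3)"
  shows "P M V s"
  using assms(1)
proof (induction rule: unif.induct)
  case (var i) then show ?case using assms(2) by simp
next
  case (abs B B' ss) then show ?case using assms(3) by (simp add: id_ev_def)
next
  case (con M B s1 N N' s2 B' s3)
  then have "N' = N" "s2 = []" by (auto simp: id_ev_def)
  with con assms(4)[of M B s1 N B' s3] show ?case by simp
next
  case (neu M M' s1 M'' s2 N N' s3)
  then have "M'' = M'" "s2 = []" "iis N N' s3" "P N N' s3" by (auto simp: id_ev_def)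
  with neu assms(5)[of M M' s1 N N' s3] show ?case by simp
qed

lemma hy_induct [consumes 1, case_names Var Abs con neu]:
  assumes "hy M V s"
    and "\<And>i. P (Var i) (Var i) []"
    and "\<And>B. P (Abs B) (Abs B) []"
    and "\<And>M B s1 N V s3. cbn M (Abs B) s1 \<Longrightarrow>
           hy (beta_contract B N) V s3 \<Longrightarrow> P (beta_contract B N) V s3 \<Longrightarrow>
           P (App M N) V (liftL N s1 @ ([], beta_contract B N) # s3)"
    and "\<And>M M' s1 M'' s2 N N' s3. cbn M M' s1 \<Longrightarrow> \<not> is_abs M' \<Longrightarrow>
           hy M' M'' s2 \<Longrightarrow> P M' M'' s2 \<Longrightarrow> hy N N' s3 \<Longrightarrow> P N N' s3 \<Longrightarrow>
           P (App M N) (App M'' N') (liftL N s1 @ liftL N s2 @ liftR M'' s3)"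
  shows "P M V s"
  using assms(1)
proof (induction rule: hyb.induct)
  case (var i) then show ?case using assms(2) by simp
next
  case (abs B B' ss) then show ?case using assms(3) by (simp add: id_ev_def)
next
  case (con M B s1 N N' s2 B' s3)
  then have "N' = N" "s2 = []" by (auto simp: id_ev_def)
  with con assms(4)[of M B s1 N B' s3] show ?case by simp
next
  case (neu M M' s1 M'' s2 N N' s3)
  then have "hy N N' s3" "P N N' s3" by auto
  with neu assms(5)[of M M' s1 M'' s2 N N' s3] show ?case by simp
qed

lemma cbn_AppE:
  assumes "cbn (App M N) V s"
  obtains B s1 s3 where "cbn M (Abs B) s1" "cbn (beta_contract B N) V s3"
      "s = liftL N s1 @ ([], beta_contract B N) # s3"
  | M' s1 where "cbn M M' s1" "\<not> is_abs M'" "V = App M' N" "s = liftL N s1"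
  using assms by (cases rule: unif.cases) (auto simp: id_ev_def)

lemma iis_AppE:
  assumes "iis (App M N) V s"
  obtains B s1 s3 where "iis M (Abs B) s1" "iis (beta_contract B N) V s3"
      "s = liftL N s1 @ ([], beta_contract B N) # s3"
  | M' s1 N' s3 where "iis M M' s1" "\<not> is_abs M'" "iis N N' s3" "V = App M' N'"
      "s = liftL N s1 @ liftR M' s3"
  using assms by (cases rule: unif.cases) (auto simp: id_ev_def)

lemma hy_AppE:
  assumes "hy (App M N) V s"
  obtains B s1 s3 where "cbn M (Abs B) s1" "hy (beta_contract B N) V s3"
      "s = liftL N s1 @ ([], beta_contract B N) # s3"
  | M' s1 M'' s2 N' s3 where "cbn M M' s1" "\<not> is_abs M'" "hy M' M'' s2" "hy N N' s3"
      "V = App M'' N'" "s = liftL N s1 @ liftL N s2 @ liftR M'' s3"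
  using assms by (cases rule: hyb.cases) (auto simp: id_ev_def)

inductive whnf :: "dB \<Rightarrow> bool" where
  Var: "whnf (Var i)"
| Abs: "whnf (Abs B)"
| App: "whnf M \<Longrightarrow> \<not> is_abs M \<Longrightarrow> whnf (App M N)"

lemma cbn_whnf: "cbn M V s \<Longrightarrow> whnf V"
  by (induction rule: cbn_induct) (auto intro: whnf.intros)

lemma whnf_cbn_refl: "whnf M \<Longrightarrow> cbn M M []"
proof (induction rule: whnf.induct)
  case (Var i) show ?case by (rule unif.var)
next
  case (Abs B) show ?case by (rule cbn_AbsI)
next
  case (App M N) then show ?case using cbn_neuI[of M M "[]" N] by simp
qed

lemma cbn_deterministic: "cbn M V s \<Longrightarrow> cbn M V' s' \<Longrightarrow> V' = V \<and> s' = s"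
proof (induction arbitrary: V' s' rule: cbn_induct)
  case (Var i) then show ?case by (auto elim: unif.cases)
next
  case (Abs B) then show ?case by (auto elim: unif.cases simp: id_ev_def)
next
  case (con M B s1 N V s3)
  from con.prems show ?case
  proof (cases rule: cbn_AppE)
    case (1 B' t1 t3)
    with con.IH(1) have "B' = B" "t1 = s1" by auto
    with 1 con.IH(2) show ?thesis by auto
  next
    case (2 M' t1)
    with con.IH(1) show ?thesis by (auto simp: is_abs_def)
  qed
next
  case (neu M M' s1 N)
  from neu.prems show ?case
  proof (cases rule: cbn_AppE)
    case (1 B t1 t3)
    with neu.IH neu.hyps(2) show ?thesis by (auto simp: is_abs_def)
  next
    case (2 M'' t1)
    with neu.IH show ?thesis by auto
  qed
qed

lemma cbn_result_fixed: "cbn M P s \<Longrightarrow> cbn P V t \<Longrightarrow> V = P \<and> t = []"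
  using cbn_deterministic whnf_cbn_refl cbn_whnf by blast

lemma rb_AbsD: "rb P (Abs B) s \<Longrightarrow> P = Abs B \<and> s = []"
  by (auto elim: rb.cases)

lemma rb_is_abs_iff: "rb P V s \<Longrightarrow> is_abs V \<longleftrightarrow> is_abs P"
  by (auto elim: rb.cases simp: is_abs_def)

lemma iis_decompose: "iis M V s \<Longrightarrow> \<exists>P s1 s2. cbn M P s1 \<and> rb P V s2 \<and> s = s1 @ s2"
proof (induction rule: iis_induct)
  case (Var i) then show ?case by (auto intro: unif.var rb.var)
next
  case (Abs B) then show ?case using cbn_AbsI rb.abs by fastforce
next
  case (con M B s1 N V s3)
  then obtain P t1 t2 where M: "cbn M P t1" "rb P (Abs B) t2" "s1 = t1 @ t2" by blast
  from con obtain Q u1 u2 where C: "cbn (beta_contract B N) Q u1" "rb Q V u2" "s3 = u1 @ u2"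
    by blast
  from M rb_AbsD[OF M(2)] have "cbn M (Abs B) s1" by simp
  from cbn_conI[OF this C(1)] C show ?case by fastforce
next
  case (neu M M' s1 N N' s3)
  then obtain P t1 t2 where M: "cbn M P t1" "rb P M' t2" "s1 = t1 @ t2" by blast
  from neu obtain Q u1 u2 where N: "cbn N Q u1" "rb Q N' u2" "s3 = u1 @ u2" by blast
  have "\<not> is_abs P" using rb_is_abs_iff[OF M(2)] neu.hyps(2) by blast
  with M N show ?case
    by (intro exI[of _ "App P N"]) (auto intro: cbn_neuI rb.app)
qed

lemma iis_AbsD_cbn: "iis M (Abs B) s \<Longrightarrow> cbn M (Abs B) s"
  using iis_decompose rb_AbsD by fastforce

lemma cbn_iis_trans: "cbn M P s1 \<Longrightarrow> iis P V s2 \<Longrightarrow> iis M V (s1 @ s2)"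
proof (induction arbitrary: V s2 rule: cbn_induct)
  case (Var i) then show ?case by simp
next
  case (Abs B) then show ?case by simp
next
  case (con M B s1 N P s3)
  have "iis M (Abs B) s1" using con.IH(1)[OF iis_AbsI] by simp
  from iis_conI[OF this con.IH(2)[OF con.prems]] show ?case by simp
next
  case (neu M M' s1 N)
  from neu.prems show ?case
  proof (cases rule: iis_AppE)
    case (1 B t1 t3)
    with cbn_result_fixed[OF neu.hyps(1)] iis_AbsD_cbn neu.hyps(2) show ?thesis
      by (fastforce simp: is_abs_def)
  next
    case (2 M'' t1 N' t3)
    then have "iis M M'' (s1 @ t1)" using neu.IH by simp
    from iis_neuI[OF this 2(2,3)] 2 show ?thesis by simp
  qed
qed

lemma rb_iis: "rb P V s \<Longrightarrow> whnf P \<Longrightarrow> iis P V s"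
proof (induction rule: rb.induct)
  case (var i) show ?case by (rule unif.var)
next
  case (abs B) show ?case by (rule iis_AbsI)
next
  case (app M M' s1 N N1 s2 N' s3)
  from app.prems have M: "whnf M" "\<not> is_abs M" by (auto elim: whnf.cases)
  have N: "iis N N' (s2 @ s3)"
    using cbn_iis_trans[OF app.hyps(2) app.IH(2)[OF cbn_whnf[OF app.hyps(2)]]] .
  from iis_neuI[OF app.IH(1)[OF M(1)] _ N] rb_is_abs_iff[OF app.hyps(1)] M(2)
  show ?case by simp
qed

lemma iis_eq_rb_comp_cbn: "iis M V s \<longleftrightarrow> comp_ev rb cbn M V s"
  unfolding comp_ev_def
  using iis_decompose cbn_iis_trans rb_iis cbn_whnf by blast

lemma hy_decompose: "hy M V s \<Longrightarrow> \<exists>P s1 s2. cbn M P s1 \<and> rb P V s2 \<and> s = s1 @ s2"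
proof (induction rule: hy_induct)
  case (Var i) then show ?case by (auto intro: unif.var rb.var)
next
  case (Abs B) then show ?case using cbn_AbsI rb.abs by fastforce
next
  case (con M B s1 N V s3)
  then obtain Q u1 u2 where C: "cbn (beta_contract B N) Q u1" "rb Q V u2" "s3 = u1 @ u2"
    by blast
  from cbn_conI[OF con.hyps(1) C(1)] C show ?case by fastforce
next
  case (neu M M' s1 M'' s2 N N' s3)
  then obtain P t1 t2 where M': "cbn M' P t1" "rb P M'' t2" "s2 = t1 @ t2" by blast
  then have "P = M'" "t1 = []" using cbn_result_fixed[OF neu.hyps(1)] by auto
  from neu obtain Q u1 u2 where N: "cbn N Q u1" "rb Q N' u2" "s3 = u1 @ u2" by blast
  from M' N \<open>P = M'\<close> \<open>t1 = []\<close> neu.hyps(1,2) show ?case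
    by (intro exI[of _ "App M' N"]) (auto intro: cbn_neuI rb.app)
qed

lemma cbn_hy_trans: "cbn M P s1 \<Longrightarrow> hy P V s2 \<Longrightarrow> hy M V (s1 @ s2)"
proof (induction arbitrary: V s2 rule: cbn_induct)
  case (Var i) then show ?case by simp
next
  case (Abs B) then show ?case by simp
next
  case (con M B s1 N P s3)
  from hy_conI[OF con.hyps(1) con.IH(2)[OF con.prems]] show ?case by simp
next
  case (neu M M' s1 N)
  note fixed = cbn_result_fixed[OF neu.hyps(1)]
  from neu.prems show ?case
  proof (cases rule: hy_AppE)
    case (1 B t1 t3)
    with fixed neu.hyps(2) show ?thesis by (fastforce simp: is_abs_def)
  next
    case (2 M'' t1 M''' t2 N' t3)
    with fixed have "M'' = M'" "t1 = []" by auto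
    with hy_neuI[OF neu.hyps(1,2) _ 2(4)] 2 show ?thesis by simp
  qed
qed

lemma rb_hy: "rb P V s \<Longrightarrow> whnf P \<Longrightarrow> hy P V s"
proof (induction rule: rb.induct)
  case (var i) show ?case by (rule hyb.var)
next
  case (abs B) show ?case by (rule hy_AbsI)
next
  case (app M M' s1 N N1 s2 N' s3)
  from app.prems have M: "whnf M" "\<not> is_abs M" by (auto elim: whnf.cases)
  have N: "hy N N' (s2 @ s3)"
    using cbn_hy_trans[OF app.hyps(2) app.IH(2)[OF cbn_whnf[OF app.hyps(2)]]] .
  from hy_neuI[OF whnf_cbn_refl[OF M(1)] M(2) app.IH(1)[OF M(1)] N] show ?case by simp
qed

lemma hy_eq_rb_comp_cbn: "hy M V s \<longleftrightarrow> comp_ev rb cbn M V s"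
  unfolding comp_ev_def
  using hy_decompose cbn_hy_trans rb_hy cbn_whnf by blast

theorem mainTheorem7:
  shows "(\<forall>M V ss. hyb LI LI LH (unif LI LI LI) M V ss \<longleftrightarrow> unif LI LI LS M V ss)
       \<and> (\<forall>M V ss. unif LI LI LS M V ss \<longleftrightarrow> comp_ev rb (unif LI LI LI) M V ss)"
  using hy_eq_rb_comp_cbn iis_eq_rb_comp_cbn by blast

end
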